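(* Let $\kappa$ be a gravitational lens satisfying the conditions in the context, and let $\alpha(x)=\frac{2}{x}\int_0^x\kappa(t)\,t\,dt$ for $x>0$ be its normalized deflection angle. An Einstein ring is a radius $x_E>0$ with $\alpha(x_E)=x_E$. If an Einstein ring exists, then there is exactly one.
   Context: A gravitational lens (in a single lens plane) is given by a normalized surface density $\kappa$ on the plane $\mathbb{R}^2$ satisfying: (i) Continuity: $\kappa:\mathbb{R}^2\to[0,\infty)$ is continuous, except possibly at the origin for singular lenses. (ii) Circular symmetry: $\kappa$ depends only on the radius $x=\|\mathbf{x}\|$; write $\kappa=\kappa(x)$. (iii) Finiteness: $\kappa(x)<\infty$ for $x>0$; $\kappa(0)=1/C_1$ for a constant $C_1\ge 0$ (so $\kappa(0)=+\infty$ when $C_1=0$); and $\lim_{x\to\infty}\kappa(x)\,x=C_2$ for a constant $0\le C_2<\infty$. (iv) Self-gravitation: $\kappa(x)<\bar\kappa(x)$ for $x>0$, where $\bar\kappa(x)=\frac{2}{x^2}\int_0^x\kappa(t)\,t\,dt$. The lens is called singular if and only if $C_1=0$, and non-singular otherwise. The deflection angle $\alpha$ is the radial derivative of the lensing potential $f$ solving $\Delta f=2\kappa$, which for a circularly symmetric lens is $\alpha(x)=\frac{2}{x}\int_0^x\kappa(t)\,t\,dt$. *)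

theory Defs
  imports "HOL-Analysis.Analysis"
begin

text \<open>A circularly symmetric lens is represented by its radial profile
  kappa :: real => real, of which only the values on [0, infinity) matter.\<close>

definition mean_kappa :: "(real \<Rightarrow> real) \<Rightarrow> real \<Rightarrow> real" where
  "mean_kappa \<kappa> x = 2 / x^2 * integral {0..x} (\<lambda>t. \<kappa> t * t)"

definition deflection :: "(real \<Rightarrow> real) \<Rightarrow> real \<Rightarrow> real" where
  "deflection \<kappa> x = 2 / x * integral {0..x} (\<lambda>t. \<kappa> t * t)"

text \<open>For a singular lens (C1 = 0), kappa(0) = +infinity is
  read as kappa(x) tending to +infinity as x tends to 0 from the right.
  Integrability of kappa(t) t on [0,x] is assumed so that mean_kappa and the
  deflection angle are defined.\<close>

definition grav_lens :: "(real \<Rightarrow> real) \<Rightarrow> real \<Rightarrow> real \<Rightarrow> bool" where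
  "grav_lens \<kappa> C1 C2 \<longleftrightarrow>
     (\<forall>x\<ge>0. 0 \<le> \<kappa> x) \<and>
     continuous_on {0<..} \<kappa> \<and>
     (\<forall>x>0. (\<lambda>t. \<kappa> t * t) integrable_on {0..x}) \<and>
     0 \<le> C1 \<and>
     (0 < C1 \<longrightarrow> \<kappa> 0 = 1 / C1 \<and> continuous (at_right 0) \<kappa>) \<and>
     (C1 = 0 \<longrightarrow> filterlim \<kappa> at_top (at_right 0)) \<and>
     0 \<le> C2 \<and> ((\<lambda>x. \<kappa> x * x) \<longlongrightarrow> C2) at_top \<and>
     (\<forall>x>0. \<kappa> x < mean_kappa \<kappa> x)"

end

theory Submission
  imports Defs
begin

text \<open>Since \<open>deflection \<kappa> x = x * mean_kappa \<kappa> x\<close>, Einstein rings are exactly the radii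
  where the mean density equals 1. Differentiating gives
  \<open>mean_kappa' x = 2 / x * (\<kappa> x - mean_kappa \<kappa> x)\<close>, which is negative by the
  self-gravitation condition, so the mean density is strictly decreasing and takes the
  value 1 at most once.\<close>

lemma integral_has_real_derivative_open_right:
  fixes f :: "real \<Rightarrow> real"
  assumes cont: "continuous_on {a<..} f"
    and int: "\<And>y. y > a \<Longrightarrow> f integrable_on {a..y}"
    and x: "x > a"
  shows "((\<lambda>y. integral {a..y} f) has_real_derivative f x) (at x)"
proof -
  define c where "c = (a + x) / 2"
  define b where "b = x + 1"
  have cb: "a < c" "c < x" "x < b" using x by (auto simp: c_def b_def)
  have "continuous_on {c..b} f"
    by (rule continuous_on_subset[OF cont]) (use cb in auto)
  then have "((\<lambda>y. integral {c..y} f) has_real_derivative f x) (at x within {c..b})"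
    by (rule integral_has_real_derivative) (use cb in auto)
  moreover have "x \<in> interior {c..b}" using cb by simp
  ultimately have "((\<lambda>y. integral {c..y} f) has_real_derivative f x) (at x)"
    by (metis at_within_interior)
  then have "((\<lambda>y. integral {a..c} f + integral {c..y} f) has_real_derivative f x) (at x)"
    by (auto intro!: derivative_eq_intros)
  then show ?thesis
  proof (rule has_field_derivative_transform_within_open[where S = "{c<..<b}"])
    fix y assume y: "y \<in> {c<..<b}"
    then show "integral {a..c} f + integral {c..y} f = integral {a..y} f"
      using Henstock_Kurzweil_Integration.integral_combine[where a = a and c = c and b = y]
        int[of y] cb by auto
  qed (use cb in auto)
qed

lemma mean_kappa_has_real_derivative:
  assumes cont: "continuous_on {0<..} \<kappa>"
    and int: "\<And>y. y > 0 \<Longrightarrow> (\<lambda>t. \<kappa> t * t) integrable_on {0..y}"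
    and x: "x > 0"
  shows "(mean_kappa \<kappa> has_real_derivative 2 / x * (\<kappa> x - mean_kappa \<kappa> x)) (at x)"
proof -
  define F where "F = (\<lambda>y. integral {0..y} (\<lambda>t. \<kappa> t * t))"
  have "continuous_on {0<..} (\<lambda>t. \<kappa> t * t)"
    by (intro continuous_intros cont)
  then have dF: "(F has_real_derivative \<kappa> x * x) (at x)"
    unfolding F_def using int x by (rule integral_has_real_derivative_open_right)
  have mean: "mean_kappa \<kappa> = (\<lambda>y. 2 * F y / y^2)"
    by (auto simp: mean_kappa_def F_def)
  have "(mean_kappa \<kappa> has_real_derivative
      (2 * (\<kappa> x * x) * x^2 - 2 * F x * (2 * x)) / (x^2)^2) (at x)"
    unfolding mean using x by (auto intro!: derivative_eq_intros dF simp: power2_eq_square)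
  moreover have "(2 * (\<kappa> x * x) * x^2 - 2 * F x * (2 * x)) / (x^2)^2
      = 2 / x * (\<kappa> x - mean_kappa \<kappa> x)"
    using x by (simp add: mean field_simps power2_eq_square)
  ultimately show ?thesis
    by simp
qed

lemma mean_kappa_strict_antimono:
  assumes cont: "continuous_on {0<..} \<kappa>"
    and int: "\<And>y. y > 0 \<Longrightarrow> (\<lambda>t. \<kappa> t * t) integrable_on {0..y}"
    and self_grav: "\<And>y. y > 0 \<Longrightarrow> \<kappa> y < mean_kappa \<kappa> y"
    and "0 < a" "a < b"
  shows "mean_kappa \<kappa> b < mean_kappa \<kappa> a"
proof (rule DERIV_neg_imp_decreasing[OF \<open>a < b\<close>])
  fix x assume "a \<le> x"
  then have "x > 0" using \<open>0 < a\<close> by linarith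
  show "\<exists>d. DERIV (mean_kappa \<kappa>) x :> d \<and> d < 0"
  proof (intro exI conjI)
    show "DERIV (mean_kappa \<kappa>) x :> 2 / x * (\<kappa> x - mean_kappa \<kappa> x)"
      using mean_kappa_has_real_derivative[OF cont int \<open>x > 0\<close>] .
    show "2 / x * (\<kappa> x - mean_kappa \<kappa> x) < 0"
      using self_grav[OF \<open>x > 0\<close>] \<open>x > 0\<close> by (intro mult_pos_neg) simp_all
  qed
qed

lemma deflection_eq_mult_mean_kappa:
  assumes "x \<noteq> 0"
  shows "deflection \<kappa> x = x * mean_kappa \<kappa> x"
  using assms by (simp add: deflection_def mean_kappa_def power2_eq_square)

lemma deflection_eq_self_iff:
  assumes "x > 0"
  shows "deflection \<kappa> x = x \<longleftrightarrow> mean_kappa \<kappa> x = 1"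
  using assms by (simp add: deflection_eq_mult_mean_kappa)

theorem theorem2:
  fixes \<kappa> :: "real \<Rightarrow> real" and C1 C2 :: real
  assumes "grav_lens \<kappa> C1 C2"
    and "\<exists>xE>0. deflection \<kappa> xE = xE"
  shows "\<exists>!xE. 0 < xE \<and> deflection \<kappa> xE = xE"
proof (rule ex_ex1I)
  show "\<exists>xE. 0 < xE \<and> deflection \<kappa> xE = xE" using assms(2) by blast
next
  have cont: "continuous_on {0<..} \<kappa>"
    and int: "\<And>y. y > 0 \<Longrightarrow> (\<lambda>t. \<kappa> t * t) integrable_on {0..y}"
    and self_grav: "\<And>y. y > 0 \<Longrightarrow> \<kappa> y < mean_kappa \<kappa> y"
    using assms(1) by (auto simp: grav_lens_def)
  note decreasing = mean_kappa_strict_antimono[OF cont int self_grav]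
  fix x y assume "0 < x \<and> deflection \<kappa> x = x" "0 < y \<and> deflection \<kappa> y = y"
  then have "0 < x" "0 < y" "mean_kappa \<kappa> x = 1" "mean_kappa \<kappa> y = 1"
    by (auto simp: deflection_eq_self_iff)
  then show "x = y"
    using decreasing[of x y] decreasing[of y x] by (cases x y rule: linorder_cases) auto
qed

end
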